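(* Let $\mathbb{X}$ be a finite set, $\mathcal{H}_A$ a finite-dimensional Hilbert space, and $\{\rho_A^x\}_{x\in\mathbb{X}}$ density operators on $\mathcal{H}_A$. Define the barycentric quantum Rényi leakage \[ \mathcal{B}(X\rightarrow A)_{\rho_A}=\min_{\pi\in\Delta(\mathbb{X})}\max_{x\in\mathbb{X}}\widetilde{D}_\infty\Big(\rho_A^x\,\Big\|\,\sum_{x'\in\mathbb{X}}\pi(x')\rho_A^{x'}\Big). \] Then: (a) $\mathcal{B}(X\rightarrow A)_{\rho_A}\geq 0$, with equality if and only if $\rho_A^x=\rho_A^{x'}$ for all $x,x'\in\mathbb{X}$; (b) for any unitary $U$ on $\mathcal{H}_A$, the barycentric quantum Rényi leakage of the family $\{U\rho_A^xU^\dagger\}_{x\in\mathbb{X}}$ equals that of $\{\rho_A^x\}_{x\in\mathbb{X}}$; (c) for any quantum channel $\mathcal{E}$ (completely positive trace-preserving map) with domain the operators on $\mathcal{H}_A$, the barycentric quantum Rényi leakage of the family $\{\mathcal{E}(\rho_A^x)\}_{x\in\mathbb{X}}$ is at most that of $\{\rho_A^x\}_{x\in\mathbb{X}}$.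
   Context: All logarithms are base 2. $\Delta(\mathbb{X})$ is the set of probability mass functions on $\mathbb{X}$. For a density operator $\rho$ and positive semi-definite $\sigma$, $\widetilde{D}_\infty(\rho\|\sigma)=\log\big(\inf\{\mu\in\mathbb{R}:\rho\leq\mu\sigma\}\big)$, equal to $+\infty$ if the support of $\rho$ is not contained in that of $\sigma$. *)

theory Defs
  imports "Jordan_Normal_Form.Schur_Decomposition" "HOL-Library.Extended_Real"
begin

text \<open>Operators on a d-dimensional Hilbert space are d x d complex matrices.\<close>

definition mtrace :: "complex mat \<Rightarrow> complex" where
  "mtrace A = (\<Sum>i<dim_row A. A $$ (i, i))"

definition psd :: "complex mat \<Rightarrow> bool" where
  "psd A \<longleftrightarrow> A \<in> carrier_mat (dim_row A) (dim_row A) \<and>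
     (\<forall>v \<in> carrier_vec (dim_row A).
        Im (conjugate v \<bullet> (A *\<^sub>v v)) = 0 \<and> Re (conjugate v \<bullet> (A *\<^sub>v v)) \<ge> 0)"

definition density :: "nat \<Rightarrow> complex mat \<Rightarrow> bool" where
  "density d A \<longleftrightarrow> A \<in> carrier_mat d d \<and> psd A \<and> mtrace A = 1"

definition unitary_mat :: "nat \<Rightarrow> complex mat \<Rightarrow> bool" where
  "unitary_mat d U \<longleftrightarrow> U \<in> carrier_mat d d \<and>
     U * mat_adjoint U = 1\<^sub>m d \<and> mat_adjoint U * U = 1\<^sub>m d"

definition pmf_on :: "('x::finite \<Rightarrow> real) \<Rightarrow> bool" where
  "pmf_on \<pi> \<longleftrightarrow> (\<forall>x. \<pi> x \<ge> 0) \<and> (\<Sum>x\<in>UNIV. \<pi> x) = 1"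

definition mixture :: "nat \<Rightarrow> ('x::finite \<Rightarrow> real) \<Rightarrow> ('x \<Rightarrow> complex mat) \<Rightarrow> complex mat" where
  "mixture d \<pi> \<rho> = mat d d (\<lambda>(i, j). \<Sum>x\<in>UNIV. complex_of_real (\<pi> x) * \<rho> x $$ (i, j))"

text \<open>Max-relative entropy: log2 inf {mu in R : rho <= mu sigma}, +infinity if the set is empty
  (equivalently, if supp rho is not contained in supp sigma).\<close>
definition Dmax :: "complex mat \<Rightarrow> complex mat \<Rightarrow> ereal" where
  "Dmax \<rho> \<sigma> =
     (if \<exists>\<mu>::real. psd (complex_of_real \<mu> \<cdot>\<^sub>m \<sigma> - \<rho>)
      then ereal (log 2 (Inf {\<mu>::real. psd (complex_of_real \<mu> \<cdot>\<^sub>m \<sigma> - \<rho>)}))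
      else \<infinity>)"

definition leakage :: "nat \<Rightarrow> ('x::finite \<Rightarrow> complex mat) \<Rightarrow> ereal" where
  "leakage d \<rho> = (INF \<pi>\<in>{\<pi>. pmf_on \<pi>}. SUP x\<in>UNIV. Dmax (\<rho> x) (mixture d \<pi> \<rho>))"

text \<open>Quantum channels from d x d to d' x d' matrices: linear, trace preserving,
  completely positive (id_k tensor E positive for every k).\<close>
definition block :: "nat \<Rightarrow> nat \<Rightarrow> nat \<Rightarrow> complex mat \<Rightarrow> complex mat" where
  "block d i j M = mat d d (\<lambda>(a, b). M $$ (i * d + a, j * d + b))"

definition ampliate :: "nat \<Rightarrow> nat \<Rightarrow> nat \<Rightarrow> (complex mat \<Rightarrow> complex mat) \<Rightarrow> complex mat \<Rightarrow> complex mat" where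
  "ampliate k d d' E M =
     mat (k * d') (k * d') (\<lambda>(a, b). E (block d (a div d') (b div d') M) $$ (a mod d', b mod d'))"

definition channel :: "nat \<Rightarrow> nat \<Rightarrow> (complex mat \<Rightarrow> complex mat) \<Rightarrow> bool" where
  "channel d d' E \<longleftrightarrow>
     (\<forall>A \<in> carrier_mat d d. E A \<in> carrier_mat d' d') \<and>
     (\<forall>A \<in> carrier_mat d d. \<forall>B \<in> carrier_mat d d. E (A + B) = E A + E B) \<and>
     (\<forall>A \<in> carrier_mat d d. \<forall>c. E (c \<cdot>\<^sub>m A) = c \<cdot>\<^sub>m E A) \<and>
     (\<forall>A \<in> carrier_mat d d. mtrace (E A) = mtrace A) \<and>
     (\<forall>k. \<forall>M \<in> carrier_mat (k * d) (k * d). psd M \<longrightarrow> psd (ampliate k d d' E M))"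

end

theory Submission
  imports Defs
begin

(* A state can be dominated by mu sigma, with sigma a state, only if mu >= 1 (compare traces),
   so D_max between states is nonnegative, and it vanishes for rho = sigma.
   A positive trace-preserving linear map preserves mu sigma - rho >= 0 and commutes with mixtures,
   so it can only decrease the leakage; channels are such maps, and so are the conjugations by
   U and by U^dagger, which undo each other.

   If the leakage vanishes, then for every delta > 0 a single mixture sigma dominates every rho_x
   with a factor mu_x < 1 + delta. The positive matrix mu_x sigma - rho_x has trace mu_x - 1 < delta,
   so its quadratic form at every vector e_i + c e_j with |c| <= 1 is at most 4 delta. Hence the
   quadratic forms of all rho_x at these vectors are 8 delta-close to those of sigma, so they
   coincide, and polarization (c = 0, 1, i) recovers the matrix entries. *)

section \<open>Quadratic forms of positive matrices\<close>

definition pair_vec :: "nat \<Rightarrow> nat \<Rightarrow> nat \<Rightarrow> complex \<Rightarrow> complex vec" where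
  "pair_vec n i j c = vec n (\<lambda>k. (if k = i then 1 else 0) + (if k = j then c else 0))"

definition pair_form :: "complex mat \<Rightarrow> nat \<Rightarrow> nat \<Rightarrow> complex \<Rightarrow> complex" where
  "pair_form A i j c = A $$ (i, i) + c * A $$ (i, j) + cnj c * A $$ (j, i) + cnj c * c * A $$ (j, j)"

lemma pair_vec_carrier [simp]: "pair_vec n i j c \<in> carrier_vec n"
  by (simp add: pair_vec_def)

lemma mult_mat_vec_pair_vec:
  assumes "A \<in> carrier_mat n n" "i < n" "j < n" "k < n"
  shows "(A *\<^sub>v pair_vec n i j c) $ k = A $$ (k, i) + c * A $$ (k, j)"
proof -
  have "(A *\<^sub>v pair_vec n i j c) $ k =
      (\<Sum>l<n. A $$ (k, l) * ((if l = i then 1 else 0) + (if l = j then c else 0)))"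
    using assms by (simp add: scalar_prod_def pair_vec_def row_def atLeast0LessThan)
  also have "\<dots> = (\<Sum>l<n. if l = i then A $$ (k, l) else 0) + (\<Sum>l<n. if l = j then A $$ (k, l) * c else 0)"
    unfolding sum.distrib[symmetric] by (rule sum.cong) (auto simp: algebra_simps)
  also have "\<dots> = A $$ (k, i) + c * A $$ (k, j)"
    using assms by simp
  finally show ?thesis .
qed

lemma quad_form_pair_vec:
  assumes "A \<in> carrier_mat n n" "i < n" "j < n"
  shows "conjugate (pair_vec n i j c) \<bullet> (A *\<^sub>v pair_vec n i j c) = pair_form A i j c"
proof -
  have "conjugate (pair_vec n i j c) \<bullet> (A *\<^sub>v pair_vec n i j c) =
      (\<Sum>k<n. ((if k = i then 1 else 0) + (if k = j then cnj c else 0)) * (A $$ (k, i) + c * A $$ (k, j)))"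
    using assms mult_mat_vec_pair_vec[OF assms]
    by (auto simp: scalar_prod_def pair_vec_def atLeast0LessThan intro!: sum.cong)
  also have "\<dots> = (\<Sum>k<n. if k = i then A $$ (k, i) + c * A $$ (k, j) else 0)
      + (\<Sum>k<n. if k = j then cnj c * (A $$ (k, i) + c * A $$ (k, j)) else 0)"
    unfolding sum.distrib[symmetric] by (rule sum.cong) (auto simp: algebra_simps)
  also have "\<dots> = pair_form A i j c"
    using assms by (simp add: pair_form_def algebra_simps)
  finally show ?thesis .
qed

lemma psd_zero_mat: "psd (0\<^sub>m n n :: complex mat)"
proof -
  have "conjugate v \<bullet> ((0\<^sub>m n n :: complex mat) *\<^sub>v v) = 0" if "v \<in> carrier_vec n" for v :: "complex vec"
    using that by (simp add: scalar_prod_def)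
  then show ?thesis
    by (simp add: psd_def)
qed

lemma psd_pair_form:
  assumes "psd A" "A \<in> carrier_mat n n" "i < n" "j < n"
  shows "Im (pair_form A i j c) = 0" "0 \<le> Re (pair_form A i j c)"
proof -
  have "pair_vec n i j c \<in> carrier_vec (dim_row A)"
    using assms(2) by simp
  then show "Im (pair_form A i j c) = 0" "0 \<le> Re (pair_form A i j c)"
    using assms(1) quad_form_pair_vec[OF assms(2-4)] unfolding psd_def by metis+
qed

lemma psd_diag:
  assumes "psd A" "A \<in> carrier_mat n n" "i < n"
  shows "Im (A $$ (i, i)) = 0" "0 \<le> Re (A $$ (i, i))"
  using psd_pair_form[OF assms(1-3,3), of 0] by (simp_all add: pair_form_def)

lemma psd_trace_nonneg:
  assumes "psd A" "A \<in> carrier_mat n n"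
  shows "0 \<le> Re (mtrace A)"
  using assms psd_diag(2)[OF assms] by (auto simp: mtrace_def Re_sum intro!: sum_nonneg)

lemma psd_diag_le_trace:
  assumes "psd A" "A \<in> carrier_mat n n" "i < n"
  shows "Re (A $$ (i, i)) \<le> Re (mtrace A)"
proof -
  have "Re (A $$ (i, i)) \<le> (\<Sum>k<n. Re (A $$ (k, k)))"
    using assms psd_diag(2)[OF assms(1,2)] by (intro member_le_sum) auto
  then show ?thesis
    using assms(2) by (simp add: mtrace_def Re_sum)
qed

(* The forms at e_i + c e_j and e_i - c e_j add up to a combination of diagonal entries. *)

lemma psd_pair_form_le_trace:
  assumes "psd A" "A \<in> carrier_mat n n" "i < n" "j < n" "cmod c \<le> 1"
  shows "Re (pair_form A i j c) \<le> 4 * Re (mtrace A)"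
proof -
  have "cnj c * c = complex_of_real ((cmod c)\<^sup>2)"
    by (metis complex_norm_square mult.commute)
  then have sum_eq: "pair_form A i j c + pair_form A i j (- c) =
      2 * A $$ (i, i) + 2 * complex_of_real ((cmod c)\<^sup>2) * A $$ (j, j)"
    by (simp add: pair_form_def algebra_simps)
  have sum: "Re (pair_form A i j c) + Re (pair_form A i j (- c)) =
      2 * Re (A $$ (i, i)) + 2 * (cmod c)\<^sup>2 * Re (A $$ (j, j))"
    using arg_cong[OF sum_eq, of Re] by simp
  have "(cmod c)\<^sup>2 * Re (A $$ (j, j)) \<le> Re (A $$ (j, j))"
    using assms(5) psd_diag(2)[OF assms(1,2,4)] by (simp add: mult_left_le_one_le power_le_one)
  then show ?thesis
    using sum psd_pair_form(2)[OF assms(1-4), of "- c"]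
      psd_diag_le_trace[OF assms(1-3)] psd_diag_le_trace[OF assms(1,2,4)] by linarith
qed

lemma pair_form_smult_diff:
  assumes "A \<in> carrier_mat n n" "B \<in> carrier_mat n n" "i < n" "j < n"
  shows "pair_form (a \<cdot>\<^sub>m A - B) i j c = a * pair_form A i j c - pair_form B i j c"
  using assms by (simp add: pair_form_def algebra_simps)

lemma mtrace_smult_diff:
  assumes "A \<in> carrier_mat n n" "B \<in> carrier_mat n n"
  shows "mtrace (a \<cdot>\<^sub>m A - B) = a * mtrace A - mtrace B"
  using assms by (simp add: mtrace_def sum_subtractf sum_distrib_left)

lemma eq_mat_if_pair_forms_eq:
  assumes "A \<in> carrier_mat n n" "B \<in> carrier_mat n n"
    and "\<And>i j c. i < n \<Longrightarrow> j < n \<Longrightarrow> cmod c \<le> 1 \<Longrightarrow> pair_form A i j c = pair_form B i j c"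
  shows "A = B"
proof (rule eq_matI)
  fix i j assume "i < dim_row B" "j < dim_col B"
  then have ij: "i < n" "j < n"
    using assms(2) by auto
  have diag: "A $$ (i, i) = B $$ (i, i)" "A $$ (j, j) = B $$ (j, j)"
    using assms(3)[of i i 0] assms(3)[of j j 0] ij by (auto simp: pair_form_def)
  have "A $$ (i, j) + A $$ (j, i) = B $$ (i, j) + B $$ (j, i)"
    using assms(3)[of i j 1] ij diag by (simp add: pair_form_def)
  moreover have "\<i> * (A $$ (i, j) - A $$ (j, i)) = \<i> * (B $$ (i, j) - B $$ (j, i))"
    using assms(3)[of i j \<i>] ij diag by (simp add: pair_form_def algebra_simps)
  then have "A $$ (i, j) - A $$ (j, i) = B $$ (i, j) - B $$ (j, i)"
    by simp
  ultimately have "(A $$ (i, j) + A $$ (j, i)) + (A $$ (i, j) - A $$ (j, i)) =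
      (B $$ (i, j) + B $$ (j, i)) + (B $$ (i, j) - B $$ (j, i))"
    by (simp only:)
  then show "A $$ (i, j) = B $$ (i, j)"
    by simp
qed (use assms in auto)

section \<open>Adjoints and unitary conjugation\<close>

lemma dim_row_mat_adjoint [simp]: "dim_row (mat_adjoint A) = dim_col A"
  and dim_col_mat_adjoint [simp]: "dim_col (mat_adjoint A) = dim_row A"
  unfolding mat_adjoint_def by simp_all

lemma mat_adjoint_carrier [simp]: "A \<in> carrier_mat n m \<Longrightarrow> mat_adjoint A \<in> carrier_mat m n"
  unfolding carrier_mat_def by simp

lemma index_mat_adjoint [simp]:
  "i < dim_col A \<Longrightarrow> j < dim_row A \<Longrightarrow> mat_adjoint (A :: complex mat) $$ (i, j) = cnj (A $$ (j, i))"
  unfolding mat_adjoint_def by (simp add: mat_of_rows_index)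

lemma mat_adjoint_mat_adjoint [simp]: "mat_adjoint (mat_adjoint (A :: complex mat)) = A"
  by (rule eq_matI) simp_all

lemma scalar_prod_mat_adjoint:
  fixes V :: "complex mat"
  assumes "V \<in> carrier_mat n n" "v \<in> carrier_vec n" "w \<in> carrier_vec n"
  shows "conjugate v \<bullet> (V *\<^sub>v w) = conjugate (mat_adjoint V *\<^sub>v v) \<bullet> w"
proof -
  have "conjugate v \<bullet> (V *\<^sub>v w) = (\<Sum>i<n. cnj (v $ i) * (\<Sum>j<n. V $$ (i, j) * w $ j))"
    using assms by (simp add: scalar_prod_def row_def atLeast0LessThan)
  also have "\<dots> = (\<Sum>i<n. \<Sum>j<n. cnj (v $ i) * V $$ (i, j) * w $ j)"
    by (simp add: sum_distrib_left mult.assoc)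
  also have "\<dots> = (\<Sum>j<n. \<Sum>i<n. cnj (v $ i) * V $$ (i, j) * w $ j)"
    by (rule sum.swap)
  also have "\<dots> = (\<Sum>j<n. (\<Sum>i<n. cnj (v $ i) * V $$ (i, j)) * w $ j)"
    by (simp add: sum_distrib_right)
  also have "\<dots> = (\<Sum>j<n. cnj (\<Sum>i<n. cnj (V $$ (i, j)) * v $ i) * w $ j)"
    by (simp add: mult.commute)
  also have "\<dots> = conjugate (mat_adjoint V *\<^sub>v v) \<bullet> w"
    using assms by (simp add: scalar_prod_def row_def atLeast0LessThan)
  finally show ?thesis .
qed

lemma mtrace_mult_comm:
  fixes A B :: "complex mat"
  assumes "A \<in> carrier_mat n m" "B \<in> carrier_mat m n"
  shows "mtrace (A * B) = mtrace (B * A)"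
proof -
  have "mtrace (A * B) = (\<Sum>i<n. \<Sum>k<m. A $$ (i, k) * B $$ (k, i))"
    using assms by (simp add: mtrace_def scalar_prod_def row_def col_def atLeast0LessThan)
  also have "\<dots> = (\<Sum>k<m. \<Sum>i<n. B $$ (k, i) * A $$ (i, k))"
    by (subst sum.swap) (simp add: mult.commute)
  also have "\<dots> = mtrace (B * A)"
    using assms by (simp add: mtrace_def scalar_prod_def row_def col_def atLeast0LessThan)
  finally show ?thesis .
qed

lemma psd_conj:
  fixes V :: "complex mat"
  assumes "V \<in> carrier_mat n n" "A \<in> carrier_mat n n" "psd A"
  shows "psd (V * A * mat_adjoint V)"
  unfolding psd_def
proof (intro conjI ballI)
  have VAV: "V * A * mat_adjoint V \<in> carrier_mat n n"
    using assms(1,2) by (simp add: mult_carrier_mat[of _ n n _ n])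
  then show "V * A * mat_adjoint V \<in> carrier_mat (dim_row (V * A * mat_adjoint V)) (dim_row (V * A * mat_adjoint V))"
    using assms(1) by simp
  fix v :: "complex vec" assume "v \<in> carrier_vec (dim_row (V * A * mat_adjoint V))"
  then have v: "v \<in> carrier_vec n"
    using assms(1) by simp
  define u where "u = mat_adjoint V *\<^sub>v v"
  have u: "u \<in> carrier_vec n"
    unfolding u_def using mat_adjoint_carrier[OF assms(1)] v by (rule mult_mat_vec_carrier)
  have "(V * A * mat_adjoint V) *\<^sub>v v = V *\<^sub>v (A *\<^sub>v u)"
    using assms(1,2) u v by (simp add: u_def assoc_mult_mat_vec[of _ n n _ n])
  then have "conjugate v \<bullet> ((V * A * mat_adjoint V) *\<^sub>v v) = conjugate v \<bullet> (V *\<^sub>v (A *\<^sub>v u))"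
    by simp
  also have "\<dots> = conjugate u \<bullet> (A *\<^sub>v u)"
    unfolding u_def using u
    by (intro scalar_prod_mat_adjoint[OF assms(1) v mult_mat_vec_carrier[OF assms(2)]]) (simp add: u_def)
  finally have "conjugate v \<bullet> ((V * A * mat_adjoint V) *\<^sub>v v) = conjugate u \<bullet> (A *\<^sub>v u)" .
  then show "Im (conjugate v \<bullet> ((V * A * mat_adjoint V) *\<^sub>v v)) = 0"
    "0 \<le> Re (conjugate v \<bullet> ((V * A * mat_adjoint V) *\<^sub>v v))"
    using assms(2,3) u unfolding psd_def by auto
qed

lemma conj_mat_adjoint_cancel:
  fixes U A :: "complex mat"
  assumes "U \<in> carrier_mat d d" "mat_adjoint U * U = 1\<^sub>m d" "A \<in> carrier_mat d d"
  shows "mat_adjoint U * (U * A * mat_adjoint U) * U = A"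
proof -
  have U': "mat_adjoint U \<in> carrier_mat d d"
    using assms(1) by simp
  have "mat_adjoint U * (U * A * mat_adjoint U) = mat_adjoint U * (U * (A * mat_adjoint U))"
    using assoc_mult_mat[OF assms(1,3) U'] by simp
  also have "\<dots> = (mat_adjoint U * U) * (A * mat_adjoint U)"
    using assoc_mult_mat[OF U' assms(1), of "A * mat_adjoint U" d] assms(3) U' by simp
  also have "\<dots> = A * mat_adjoint U"
    using assms(2,3) U' by simp
  finally have "mat_adjoint U * (U * A * mat_adjoint U) * U = A * mat_adjoint U * U"
    by simp
  also have "\<dots> = A * (mat_adjoint U * U)"
    using assoc_mult_mat[OF assms(3) U' assms(1)] .
  also have "\<dots> = A"
    using assms(2,3) by simp
  finally show ?thesis .
qed

section \<open>Positive trace-preserving maps\<close>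

definition ptp_map :: "nat \<Rightarrow> nat \<Rightarrow> (complex mat \<Rightarrow> complex mat) \<Rightarrow> bool" where
  "ptp_map d d' F \<longleftrightarrow>
     (\<forall>A \<in> carrier_mat d d. F A \<in> carrier_mat d' d') \<and>
     (\<forall>A \<in> carrier_mat d d. \<forall>B \<in> carrier_mat d d. F (A + B) = F A + F B) \<and>
     (\<forall>A \<in> carrier_mat d d. \<forall>c. F (c \<cdot>\<^sub>m A) = c \<cdot>\<^sub>m F A) \<and>
     (\<forall>A \<in> carrier_mat d d. mtrace (F A) = mtrace A) \<and>
     (\<forall>A \<in> carrier_mat d d. psd A \<longrightarrow> psd (F A))"

lemma ptp_map_carrier: "ptp_map d d' F \<Longrightarrow> A \<in> carrier_mat d d \<Longrightarrow> F A \<in> carrier_mat d' d'"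
  and ptp_map_add:
    "ptp_map d d' F \<Longrightarrow> A \<in> carrier_mat d d \<Longrightarrow> B \<in> carrier_mat d d \<Longrightarrow> F (A + B) = F A + F B"
  and ptp_map_smult: "ptp_map d d' F \<Longrightarrow> A \<in> carrier_mat d d \<Longrightarrow> F (c \<cdot>\<^sub>m A) = c \<cdot>\<^sub>m F A"
  and ptp_map_mtrace: "ptp_map d d' F \<Longrightarrow> A \<in> carrier_mat d d \<Longrightarrow> mtrace (F A) = mtrace A"
  and ptp_map_psd: "ptp_map d d' F \<Longrightarrow> A \<in> carrier_mat d d \<Longrightarrow> psd A \<Longrightarrow> psd (F A)"
  unfolding ptp_map_def by blast+

lemma ptp_map_zero:
  assumes "ptp_map d d' F"
  shows "F (0\<^sub>m d d) = 0\<^sub>m d' d'"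
proof -
  have "F (0\<^sub>m d d) = F (0 \<cdot>\<^sub>m 0\<^sub>m d d)"
    by (metis smult_zero_mat)
  also have "\<dots> = 0 \<cdot>\<^sub>m F (0\<^sub>m d d)"
    by (rule ptp_map_smult[OF assms zero_carrier_mat])
  also have "\<dots> = 0\<^sub>m d' d'"
    using ptp_map_carrier[OF assms zero_carrier_mat] by (intro eq_matI) auto
  finally show ?thesis .
qed

lemma ptp_map_smult_diff:
  assumes "ptp_map d d' F" "A \<in> carrier_mat d d" "B \<in> carrier_mat d d"
  shows "F (c \<cdot>\<^sub>m A - B) = c \<cdot>\<^sub>m F A - F B"
proof -
  have "c \<cdot>\<^sub>m A - B = c \<cdot>\<^sub>m A + (-1) \<cdot>\<^sub>m B"
    using assms(2,3) by (intro eq_matI) auto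
  then have "F (c \<cdot>\<^sub>m A - B) = c \<cdot>\<^sub>m F A + (-1) \<cdot>\<^sub>m F B"
    using assms by (simp add: ptp_map_add ptp_map_smult)
  also have "\<dots> = c \<cdot>\<^sub>m F A - F B"
    using ptp_map_carrier[OF assms(1)] assms(2,3) by (intro eq_matI) auto
  finally show ?thesis .
qed

lemma channel_imp_ptp_map:
  assumes "channel d d' E"
  shows "ptp_map d d' E"
proof -
  have "psd (E A)" if A: "A \<in> carrier_mat d d" "psd A" for A
  proof -
    have "block d 0 0 A = A"
      using A(1) by (intro eq_matI) (auto simp: block_def)
    moreover have "E A \<in> carrier_mat d' d'"
      using assms A(1) by (simp add: channel_def)
    ultimately have "ampliate 1 d d' E A = E A"
      by (intro eq_matI) (auto simp: ampliate_def)
    moreover have "psd (ampliate 1 d d' E A)"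
      using assms A(2) \<open>A \<in> carrier_mat d d\<close> unfolding channel_def by (metis mult_1)
    ultimately show ?thesis
      by simp
  qed
  then show ?thesis
    using assms unfolding channel_def ptp_map_def by blast
qed

lemma ptp_map_conj:
  fixes V :: "complex mat"
  assumes "V \<in> carrier_mat d d" "mat_adjoint V * V = 1\<^sub>m d"
  shows "ptp_map d d (\<lambda>A. V * A * mat_adjoint V)"
  unfolding ptp_map_def
proof (intro conjI ballI allI impI)
  fix A :: "complex mat" assume A: "A \<in> carrier_mat d d"
  then show "V * A * mat_adjoint V \<in> carrier_mat d d"
    using assms(1) by (simp add: mult_carrier_mat[of _ d d _ d])
  show "V * (c \<cdot>\<^sub>m A) * mat_adjoint V = c \<cdot>\<^sub>m (V * A * mat_adjoint V)" for c
    using assms(1) A mult_carrier_mat[OF assms(1) A]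
    by (simp add: mult_smult_distrib mult_smult_assoc_mat[of "V * A" d d _ d])
  show "V * (A + B) * mat_adjoint V = V * A * mat_adjoint V + V * B * mat_adjoint V"
    if B: "B \<in> carrier_mat d d" for B
  proof -
    have "V * (A + B) = V * A + V * B"
      by (rule mult_add_distrib_mat[OF assms(1) A B])
    also have "(V * A + V * B) * mat_adjoint V = V * A * mat_adjoint V + V * B * mat_adjoint V"
      by (rule add_mult_distrib_mat[OF mult_carrier_mat[OF assms(1) A] mult_carrier_mat[OF assms(1) B]
            mat_adjoint_carrier[OF assms(1)]])
    finally show ?thesis .
  qed
  have "mtrace (V * A * mat_adjoint V) = mtrace (mat_adjoint V * (V * A))"
    using assms(1) A by (intro mtrace_mult_comm[of _ d d]) auto
  also have "\<dots> = mtrace A"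
    using assms A by (simp add: assoc_mult_mat[symmetric, of _ d d _ d _ d])
  finally show "mtrace (V * A * mat_adjoint V) = mtrace A" .
  show "psd A \<Longrightarrow> psd (V * A * mat_adjoint V)"
    using assms(1) A by (rule psd_conj)
qed

section \<open>Mixtures\<close>

definition mixture_on :: "nat \<Rightarrow> ('x \<Rightarrow> real) \<Rightarrow> ('x \<Rightarrow> complex mat) \<Rightarrow> 'x set \<Rightarrow> complex mat" where
  "mixture_on d \<pi> \<rho> S = mat d d (\<lambda>(i, j). \<Sum>x\<in>S. complex_of_real (\<pi> x) * \<rho> x $$ (i, j))"

lemma mixture_eq_mixture_on_UNIV: "mixture d \<pi> \<rho> = mixture_on d \<pi> \<rho> UNIV"
  by (simp add: mixture_def mixture_on_def)

lemma mixture_on_carrier [simp]: "mixture_on d \<pi> \<rho> S \<in> carrier_mat d d"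
  by (simp add: mixture_on_def)

lemma mixture_carrier [simp]: "mixture d \<pi> \<rho> \<in> carrier_mat d d"
  by (simp add: mixture_def)

lemma mixture_on_empty: "mixture_on d \<pi> \<rho> {} = 0\<^sub>m d d"
  by (rule eq_matI) (auto simp: mixture_on_def)

lemma mixture_on_insert:
  assumes "finite S" "x \<notin> S" "\<rho> x \<in> carrier_mat d d"
  shows "mixture_on d \<pi> \<rho> (insert x S) = complex_of_real (\<pi> x) \<cdot>\<^sub>m \<rho> x + mixture_on d \<pi> \<rho> S"
  by (rule eq_matI) (use assms in \<open>auto simp: mixture_on_def\<close>)

lemma ptp_map_mixture_on:
  assumes "ptp_map d d' F" "\<And>x. \<rho> x \<in> carrier_mat d d" "finite S"
  shows "F (mixture_on d \<pi> \<rho> S) = mixture_on d' \<pi> (\<lambda>x. F (\<rho> x)) S"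
  using assms(3)
proof (induction S rule: finite_induct)
  case empty
  show ?case
    using ptp_map_zero[OF assms(1)] by (simp add: mixture_on_empty)
next
  case (insert x S)
  have "F (\<rho> x) \<in> carrier_mat d' d'"
    using ptp_map_carrier[OF assms(1,2)] .
  then show ?case
    using insert assms(1,2)
    by (simp add: mixture_on_insert ptp_map_add ptp_map_smult)
qed

lemma ptp_map_mixture:
  assumes "ptp_map d d' F" "\<And>x. \<rho> x \<in> carrier_mat d d"
  shows "F (mixture d \<pi> (\<rho> :: 'x::finite \<Rightarrow> complex mat)) = mixture d' \<pi> (\<lambda>x. F (\<rho> x))"
  unfolding mixture_eq_mixture_on_UNIV using assms by (simp add: ptp_map_mixture_on)

lemma pmf_on_sum_complex: "pmf_on \<pi> \<Longrightarrow> (\<Sum>x\<in>UNIV. complex_of_real (\<pi> x)) = 1"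
  unfolding pmf_on_def by (metis of_real_1 of_real_sum)

lemma pmf_on_uniform: "pmf_on ((\<lambda>_. 1 / real (card (UNIV :: 'x set))) :: 'x::finite \<Rightarrow> real)"
  by (simp add: pmf_on_def)

lemma mtrace_mixture:
  assumes "\<And>x. \<rho> x \<in> carrier_mat d d" "\<And>x. mtrace (\<rho> x) = 1" "pmf_on \<pi>"
  shows "mtrace (mixture d \<pi> (\<rho> :: 'x::finite \<Rightarrow> complex mat)) = 1"
proof -
  have "mtrace (mixture d \<pi> \<rho>) = (\<Sum>i<d. \<Sum>x\<in>UNIV. complex_of_real (\<pi> x) * \<rho> x $$ (i, i))"
    by (simp add: mtrace_def mixture_def)
  also have "\<dots> = (\<Sum>x\<in>UNIV. \<Sum>i<d. complex_of_real (\<pi> x) * \<rho> x $$ (i, i))"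
    by (rule sum.swap)
  also have "\<dots> = (\<Sum>x\<in>UNIV. complex_of_real (\<pi> x) * mtrace (\<rho> x))"
    by (intro sum.cong refl) (simp add: mtrace_def sum_distrib_left carrier_matD(1)[OF assms(1)])
  also have "\<dots> = 1"
    using assms(2,3) by (simp add: pmf_on_sum_complex)
  finally show ?thesis .
qed

lemma mixture_const:
  assumes "pmf_on \<pi>" "A \<in> carrier_mat d d"
  shows "mixture d \<pi> (\<lambda>_. A) = A"
proof (rule eq_matI)
  fix i j assume "i < dim_row A" "j < dim_col A"
  moreover have "(\<Sum>x\<in>UNIV. complex_of_real (\<pi> x) * A $$ (i, j)) = A $$ (i, j)"
    using pmf_on_sum_complex[OF assms(1)] by (simp add: sum_distrib_right[symmetric])
  ultimately show "mixture d \<pi> (\<lambda>_. A) $$ (i, j) = A $$ (i, j)"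
    using assms(2) by (simp add: mixture_def)
qed (use assms(2) in \<open>auto simp: mixture_def\<close>)

section \<open>Max-relative entropy\<close>

definition Dmax_factors :: "complex mat \<Rightarrow> complex mat \<Rightarrow> real set" where
  "Dmax_factors \<rho> \<sigma> = {\<mu>. psd (complex_of_real \<mu> \<cdot>\<^sub>m \<sigma> - \<rho>)}"

lemma Dmax_eq_Inf_factors:
  "Dmax \<rho> \<sigma> = (if Dmax_factors \<rho> \<sigma> \<noteq> {} then ereal (log 2 (Inf (Dmax_factors \<rho> \<sigma>))) else \<infinity>)"
  unfolding Dmax_def Dmax_factors_def by auto

lemma Dmax_factor_ge_1:
  assumes "\<rho> \<in> carrier_mat n n" "\<sigma> \<in> carrier_mat n n" "mtrace \<rho> = 1" "mtrace \<sigma> = 1"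
    and "\<mu> \<in> Dmax_factors \<rho> \<sigma>"
  shows "1 \<le> \<mu>"
proof -
  have "0 \<le> Re (mtrace (complex_of_real \<mu> \<cdot>\<^sub>m \<sigma> - \<rho>))"
    using assms by (intro psd_trace_nonneg[of _ n]) (auto simp: Dmax_factors_def)
  then show ?thesis
    using assms(3,4) by (simp add: mtrace_smult_diff[OF assms(2,1)])
qed

lemma bdd_below_Dmax_factors:
  assumes "\<rho> \<in> carrier_mat n n" "\<sigma> \<in> carrier_mat n n" "mtrace \<rho> = 1" "mtrace \<sigma> = 1"
  shows "bdd_below (Dmax_factors \<rho> \<sigma>)"
  using Dmax_factor_ge_1[OF assms] by (rule bdd_belowI)

lemma Inf_Dmax_factors_ge_1:
  assumes "\<rho> \<in> carrier_mat n n" "\<sigma> \<in> carrier_mat n n" "mtrace \<rho> = 1" "mtrace \<sigma> = 1"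
    and "Dmax_factors \<rho> \<sigma> \<noteq> {}"
  shows "1 \<le> Inf (Dmax_factors \<rho> \<sigma>)"
  using assms(5) Dmax_factor_ge_1[OF assms(1-4)] by (rule cInf_greatest)

lemma Dmax_nonneg:
  assumes "\<rho> \<in> carrier_mat n n" "\<sigma> \<in> carrier_mat n n" "mtrace \<rho> = 1" "mtrace \<sigma> = 1"
  shows "0 \<le> Dmax \<rho> \<sigma>"
proof (cases "Dmax_factors \<rho> \<sigma> = {}")
  case False
  then show ?thesis
    using Inf_Dmax_factors_ge_1[OF assms] by (simp add: Dmax_eq_Inf_factors)
qed (simp add: Dmax_eq_Inf_factors)

lemma Dmax_self:
  assumes "\<rho> \<in> carrier_mat n n" "mtrace \<rho> = 1"
  shows "Dmax \<rho> \<rho> = 0"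
proof -
  have "complex_of_real 1 \<cdot>\<^sub>m \<rho> - \<rho> = 0\<^sub>m n n"
    using assms(1) by (intro eq_matI) auto
  then have one: "1 \<in> Dmax_factors \<rho> \<rho>"
    by (simp add: Dmax_factors_def psd_zero_mat)
  have "Inf (Dmax_factors \<rho> \<rho>) = 1"
    using one Dmax_factor_ge_1[OF assms(1,1,2,2)] by (rule cInf_eq_minimum)
  then show ?thesis
    using one by (auto simp: Dmax_eq_Inf_factors)
qed

lemma Dmax_less_imp_factor:
  assumes "\<rho> \<in> carrier_mat n n" "\<sigma> \<in> carrier_mat n n" "mtrace \<rho> = 1" "mtrace \<sigma> = 1"
    and "Dmax \<rho> \<sigma> < ereal e"
  obtains \<mu> where "\<mu> \<in> Dmax_factors \<rho> \<sigma>" "\<mu> < 2 powr e"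
proof -
  have ne: "Dmax_factors \<rho> \<sigma> \<noteq> {}"
    using assms(5) unfolding Dmax_eq_Inf_factors by (metis ereal_less_PInfty not_less_iff_gr_or_eq)
  then have "log 2 (Inf (Dmax_factors \<rho> \<sigma>)) < e"
    using assms(5) unfolding Dmax_eq_Inf_factors by simp
  moreover have "0 < Inf (Dmax_factors \<rho> \<sigma>)"
    using Inf_Dmax_factors_ge_1[OF assms(1-4) ne] by linarith
  ultimately have "Inf (Dmax_factors \<rho> \<sigma>) < 2 powr e"
    by (simp add: log_less_iff)
  then show ?thesis
    using cInf_lessD[OF ne] that by blast
qed

lemma Dmax_ptp_mono:
  assumes "ptp_map d d' F" "\<rho> \<in> carrier_mat d d" "\<sigma> \<in> carrier_mat d d" "mtrace \<rho> = 1" "mtrace \<sigma> = 1"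
  shows "Dmax (F \<rho>) (F \<sigma>) \<le> Dmax \<rho> \<sigma>"
proof (cases "Dmax_factors \<rho> \<sigma> = {}")
  case True
  then show ?thesis
    by (simp add: Dmax_eq_Inf_factors)
next
  case False
  have sub: "Dmax_factors \<rho> \<sigma> \<subseteq> Dmax_factors (F \<rho>) (F \<sigma>)"
  proof
    fix \<mu> assume "\<mu> \<in> Dmax_factors \<rho> \<sigma>"
    then have "psd (F (complex_of_real \<mu> \<cdot>\<^sub>m \<sigma> - \<rho>))"
      using assms by (intro ptp_map_psd[OF assms(1)]) (auto simp: Dmax_factors_def)
    then show "\<mu> \<in> Dmax_factors (F \<rho>) (F \<sigma>)"
      by (simp add: Dmax_factors_def ptp_map_smult_diff[OF assms(1,3,2)])
  qed
  then have ne: "Dmax_factors (F \<rho>) (F \<sigma>) \<noteq> {}"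
    using False by blast
  have F_state: "F \<rho> \<in> carrier_mat d' d'" "F \<sigma> \<in> carrier_mat d' d'" "mtrace (F \<rho>) = 1" "mtrace (F \<sigma>) = 1"
    using assms by (simp_all add: ptp_map_carrier ptp_map_mtrace)
  have "Inf (Dmax_factors (F \<rho>) (F \<sigma>)) \<le> Inf (Dmax_factors \<rho> \<sigma>)"
    using False bdd_below_Dmax_factors[OF F_state] sub by (rule cInf_superset_mono)
  moreover have "1 \<le> Inf (Dmax_factors (F \<rho>) (F \<sigma>))"
    using F_state ne by (rule Inf_Dmax_factors_ge_1)
  ultimately show ?thesis
    using False ne by (simp add: Dmax_eq_Inf_factors)
qed

lemma abs_diff_le_if_scaled_bounds:
  fixes \<mu> \<delta> r s :: real
  assumes "r \<le> \<mu> * s" "\<mu> * s \<le> r + 4 * (\<mu> - 1)" "0 \<le> r" "r \<le> 4" "1 \<le> \<mu>" "\<mu> \<le> 1 + \<delta>" "\<delta> \<le> 1"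
  shows "\<bar>r - s\<bar> \<le> 8 * \<delta>"
proof -
  have "0 \<le> \<mu> * s"
    using assms(1,3) by linarith
  then have "0 \<le> s"
    using assms(5) by (simp add: zero_le_mult_iff)
  then have s_le: "s \<le> \<mu> * s"
    using assms(5) mult_right_mono[of 1 \<mu> s] by simp
  also have "\<mu> * s \<le> 4 + 4 * \<delta>"
    using assms(2,4,6) by argo
  finally have "s \<le> 8"
    using assms(7) by argo
  with \<open>0 \<le> s\<close> have "(\<mu> - 1) * s \<le> \<delta> * 8"
    using assms(5,6) by (intro mult_mono) auto
  then show ?thesis
    using assms s_le by (simp add: abs_le_iff algebra_simps)
qed

lemma pair_form_close_if_Dmax_less:
  assumes "density n \<rho>" "\<sigma> \<in> carrier_mat n n" "mtrace \<sigma> = 1"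
    and "Dmax \<rho> \<sigma> < ereal (log 2 (1 + \<delta>))" "0 < \<delta>" "\<delta> \<le> 1"
    and "i < n" "j < n" "cmod c \<le> 1"
  shows "\<bar>Re (pair_form \<rho> i j c) - Re (pair_form \<sigma> i j c)\<bar> \<le> 8 * \<delta>"
proof -
  have \<rho>: "\<rho> \<in> carrier_mat n n" "psd \<rho>" "mtrace \<rho> = 1"
    using assms(1) by (auto simp: density_def)
  obtain \<mu> where \<mu>: "\<mu> \<in> Dmax_factors \<rho> \<sigma>" and "\<mu> < 2 powr log 2 (1 + \<delta>)"
    using Dmax_less_imp_factor[OF \<rho>(1) assms(2) \<rho>(3) assms(3,4)] .
  then have \<mu>_bounds: "1 \<le> \<mu>" "\<mu> \<le> 1 + \<delta>"
    using Dmax_factor_ge_1[OF \<rho>(1) assms(2) \<rho>(3) assms(3)] assms(5) by auto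
  define P where "P = complex_of_real \<mu> \<cdot>\<^sub>m \<sigma> - \<rho>"
  have P: "psd P" "P \<in> carrier_mat n n"
    using \<mu> \<rho>(1) assms(2) by (auto simp: P_def Dmax_factors_def)
  have "mtrace P = complex_of_real (\<mu> - 1)"
    unfolding P_def mtrace_smult_diff[OF assms(2) \<rho>(1)] using \<rho>(3) assms(3) by simp
  then have "0 \<le> Re (pair_form P i j c)" "Re (pair_form P i j c) \<le> 4 * (\<mu> - 1)"
    using psd_pair_form(2)[OF P assms(7,8)] psd_pair_form_le_trace[OF P assms(7-9)] by auto
  moreover have "Re (pair_form P i j c) = \<mu> * Re (pair_form \<sigma> i j c) - Re (pair_form \<rho> i j c)"
    unfolding P_def pair_form_smult_diff[OF assms(2) \<rho>(1) assms(7,8)] by simp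
  moreover have "0 \<le> Re (pair_form \<rho> i j c)" "Re (pair_form \<rho> i j c) \<le> 4"
    using psd_pair_form(2)[OF \<rho>(2,1) assms(7,8)] psd_pair_form_le_trace[OF \<rho>(2,1) assms(7-9)] \<rho>(3)
    by auto
  ultimately show ?thesis
    using \<mu>_bounds assms(6) by (intro abs_diff_le_if_scaled_bounds[of _ \<mu>]) auto
qed

section \<open>Barycentric leakage\<close>

lemma leakage_nonneg:
  assumes "\<And>x. \<rho> x \<in> carrier_mat d d" "\<And>x. mtrace (\<rho> x) = 1"
  shows "0 \<le> leakage d (\<rho> :: 'x::finite \<Rightarrow> complex mat)"
  unfolding leakage_def
proof (rule INF_greatest)
  fix \<pi> :: "'x \<Rightarrow> real" assume "\<pi> \<in> {\<pi>. pmf_on \<pi>}"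
  then have "mtrace (mixture d \<pi> \<rho>) = 1"
    using assms by (intro mtrace_mixture) auto
  then have "0 \<le> Dmax (\<rho> x) (mixture d \<pi> \<rho>)" for x
    using assms by (intro Dmax_nonneg[of _ d]) auto
  then show "0 \<le> (SUP x\<in>UNIV. Dmax (\<rho> x) (mixture d \<pi> \<rho>))"
    by (rule SUP_upper2[OF UNIV_I])
qed

lemma leakage_const:
  fixes A :: "complex mat"
  assumes "A \<in> carrier_mat d d" "mtrace A = 1"
  shows "leakage d ((\<lambda>_. A) :: 'x::finite \<Rightarrow> complex mat) = 0"
proof -
  let ?\<pi> = "(\<lambda>_. 1 / real (card (UNIV :: 'x set))) :: 'x \<Rightarrow> real"
  have "leakage d ((\<lambda>_. A) :: 'x \<Rightarrow> complex mat) \<le> (SUP x\<in>(UNIV :: 'x set). Dmax A (mixture d ?\<pi> (\<lambda>_. A)))"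
    unfolding leakage_def by (rule INF_lower) (simp add: pmf_on_uniform)
  also have "\<dots> = 0"
    using mixture_const[OF pmf_on_uniform[where 'x = 'x] assms(1)] Dmax_self[OF assms] by simp
  finally show ?thesis
    using leakage_nonneg[of "(\<lambda>_. A) :: 'x \<Rightarrow> complex mat", OF assms(1) assms(2)] by (rule order_antisym)
qed

lemma leakage_less_imp_pmf:
  assumes "leakage d \<rho> < e"
  obtains \<pi> where "pmf_on \<pi>" "\<And>x. Dmax (\<rho> x) (mixture d \<pi> (\<rho> :: 'x::finite \<Rightarrow> complex mat)) < e"
proof -
  obtain \<pi> where \<pi>: "pmf_on \<pi>" and less: "(SUP x\<in>UNIV. Dmax (\<rho> x) (mixture d \<pi> \<rho>)) < e"
    using assms unfolding leakage_def by (auto simp: INF_less_iff)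
  show ?thesis
    by (rule that[OF \<pi>]) (rule SUP_lessD[OF less UNIV_I])
qed

lemma leakage_eq_0_imp_const:
  assumes "\<forall>x. density d (\<rho> x)" "leakage d \<rho> = 0"
  shows "\<rho> x = \<rho> (x' :: 'x::finite)"
proof (rule eq_mat_if_pair_forms_eq)
  have \<rho>: "\<And>x. \<rho> x \<in> carrier_mat d d" "\<And>x. psd (\<rho> x)" "\<And>x. mtrace (\<rho> x) = 1"
    using assms(1) by (auto simp: density_def)
  then show "\<rho> x \<in> carrier_mat d d" "\<rho> x' \<in> carrier_mat d d"
    by auto
  fix i j c assume ijc: "i < d" "j < d" "cmod c \<le> 1"
  have close: "\<bar>Re (pair_form (\<rho> x) i j c) - Re (pair_form (\<rho> x') i j c)\<bar> \<le> 16 * \<delta>"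
    if "0 < \<delta>" "\<delta> \<le> 1" for \<delta>
  proof -
    have "leakage d \<rho> < ereal (log 2 (1 + \<delta>))"
      using assms(2) that by simp
    then obtain \<pi> where "pmf_on \<pi>" and less: "\<And>y. Dmax (\<rho> y) (mixture d \<pi> \<rho>) < ereal (log 2 (1 + \<delta>))"
      by (rule leakage_less_imp_pmf) blast
    then have "mtrace (mixture d \<pi> \<rho>) = 1"
      using \<rho> by (intro mtrace_mixture) auto
    then have "\<bar>Re (pair_form (\<rho> y) i j c) - Re (pair_form (mixture d \<pi> \<rho>) i j c)\<bar> \<le> 8 * \<delta>" for y
      using assms(1) less that ijc by (intro pair_form_close_if_Dmax_less) auto
    from this[of x] this[of x'] show ?thesis
      by linarith
  qed
  have "\<bar>Re (pair_form (\<rho> x) i j c) - Re (pair_form (\<rho> x') i j c)\<bar> \<le> 0"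
  proof (rule field_le_epsilon)
    fix e :: real assume "0 < e"
    then show "\<bar>Re (pair_form (\<rho> x) i j c) - Re (pair_form (\<rho> x') i j c)\<bar> \<le> 0 + e"
      using close[of "min 1 (e / 16)"] by simp
  qed
  then have "Re (pair_form (\<rho> x) i j c) = Re (pair_form (\<rho> x') i j c)"
    by simp
  moreover have "Im (pair_form (\<rho> x) i j c) = Im (pair_form (\<rho> x') i j c)"
    using psd_pair_form(1)[OF \<rho>(2,1) ijc(1,2)] by simp
  ultimately show "pair_form (\<rho> x) i j c = pair_form (\<rho> x') i j c"
    by (rule complex_eqI)
qed

lemma leakage_ptp_mono:
  assumes "ptp_map d d' F" "\<And>x. \<rho> x \<in> carrier_mat d d" "\<And>x. mtrace (\<rho> x) = 1"
  shows "leakage d' (\<lambda>x. F (\<rho> x)) \<le> leakage d (\<rho> :: 'x::finite \<Rightarrow> complex mat)"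
  unfolding leakage_def
proof (rule INF_mono)
  fix \<pi> :: "'x \<Rightarrow> real" assume \<pi>: "\<pi> \<in> {\<pi>. pmf_on \<pi>}"
  then have "mtrace (mixture d \<pi> \<rho>) = 1"
    using assms(2,3) by (intro mtrace_mixture) auto
  then have "Dmax (F (\<rho> x)) (F (mixture d \<pi> \<rho>)) \<le> Dmax (\<rho> x) (mixture d \<pi> \<rho>)" for x
    using assms by (intro Dmax_ptp_mono) auto
  moreover have "mixture d' \<pi> (\<lambda>x. F (\<rho> x)) = F (mixture d \<pi> \<rho>)"
    using assms(1,2) by (simp add: ptp_map_mixture)
  ultimately have "(SUP x\<in>UNIV. Dmax (F (\<rho> x)) (mixture d' \<pi> (\<lambda>x. F (\<rho> x))))
      \<le> (SUP x\<in>UNIV. Dmax (\<rho> x) (mixture d \<pi> \<rho>))"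
    by (simp add: SUP_mono')
  with \<pi> show "\<exists>\<pi>'\<in>{\<pi>. pmf_on \<pi>}. (SUP x\<in>UNIV. Dmax (F (\<rho> x)) (mixture d' \<pi>' (\<lambda>x. F (\<rho> x))))
      \<le> (SUP x\<in>UNIV. Dmax (\<rho> x) (mixture d \<pi> \<rho>))"
    by blast
qed

lemma leakage_unitary_invariant:
  assumes "unitary_mat d U" "\<And>x. \<rho> x \<in> carrier_mat d d" "\<And>x. mtrace (\<rho> x) = 1"
  shows "leakage d (\<lambda>x. U * \<rho> x * mat_adjoint U) = leakage d (\<rho> :: 'x::finite \<Rightarrow> complex mat)"
proof (rule order_antisym)
  have U: "U \<in> carrier_mat d d" "U * mat_adjoint U = 1\<^sub>m d" "mat_adjoint U * U = 1\<^sub>m d"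
    using assms(1) by (auto simp: unitary_mat_def)
  have conj_U: "ptp_map d d (\<lambda>A. U * A * mat_adjoint U)"
    using U(1,3) by (rule ptp_map_conj)
  have conj_adj_U: "ptp_map d d (\<lambda>A. mat_adjoint U * A * mat_adjoint (mat_adjoint U))"
    using U(1,2) by (intro ptp_map_conj) auto
  show "leakage d (\<lambda>x. U * \<rho> x * mat_adjoint U) \<le> leakage d \<rho>"
    using conj_U assms(2,3) by (rule leakage_ptp_mono)
  have "mat_adjoint U * (U * \<rho> x * mat_adjoint U) * U = \<rho> x" for x
    using U(1,3) assms(2) by (rule conj_mat_adjoint_cancel)
  then have "leakage d \<rho> = leakage d (\<lambda>x. mat_adjoint U * (U * \<rho> x * mat_adjoint U) * mat_adjoint (mat_adjoint U))"
    by simp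
  also have "\<dots> \<le> leakage d (\<lambda>x. U * \<rho> x * mat_adjoint U)"
    using conj_adj_U ptp_map_carrier[OF conj_U assms(2)] ptp_map_mtrace[OF conj_U assms(2)] assms(3)
    by (intro leakage_ptp_mono) auto
  finally show "leakage d \<rho> \<le> leakage d (\<lambda>x. U * \<rho> x * mat_adjoint U)" .
qed

theorem theorem1:
  fixes d :: nat and \<rho> :: "'x::finite \<Rightarrow> complex mat"
  assumes "\<forall>x. density d (\<rho> x)"
  shows "(leakage d \<rho> \<ge> 0 \<and> (leakage d \<rho> = 0 \<longleftrightarrow> (\<forall>x x'. \<rho> x = \<rho> x'))) \<and>
    (\<forall>U. unitary_mat d U \<longrightarrow> leakage d (\<lambda>x. U * \<rho> x * mat_adjoint U) = leakage d \<rho>) \<and>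
    (\<forall>d' E. channel d d' E \<longrightarrow> leakage d' (\<lambda>x. E (\<rho> x)) \<le> leakage d \<rho>)"
proof -
  have state: "\<And>x. \<rho> x \<in> carrier_mat d d" "\<And>x. mtrace (\<rho> x) = 1"
    using assms by (auto simp: density_def)
  have "leakage d \<rho> = 0" if "\<forall>x x'. \<rho> x = \<rho> x'"
  proof -
    have "\<rho> = (\<lambda>_. \<rho> undefined)"
      using that by blast
    then show ?thesis
      using leakage_const[OF state[of undefined]] by metis
  qed
  moreover have "0 \<le> leakage d \<rho>"
    using state by (rule leakage_nonneg)
  moreover have "leakage d (\<lambda>x. U * \<rho> x * mat_adjoint U) = leakage d \<rho>" if "unitary_mat d U" for U
    using that state by (rule leakage_unitary_invariant)
  moreover have "leakage d' (\<lambda>x. E (\<rho> x)) \<le> leakage d \<rho>" if "channel d d' E" for d' E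
    using channel_imp_ptp_map[OF that] state by (rule leakage_ptp_mono)
  ultimately show ?thesis
    using leakage_eq_0_imp_const[OF assms] by blast
qed

end
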